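(* Let $q,h,K$ be complex numbers with $K(1+q)\neq1$, and set $K'=K\big(K(1+q)-1\big)^{-1}$. For any complex $L$ let $$\hat R(L;q,h)=\begin{pmatrix}1&0&0&Lh\\0&1-L&Lq&0\\0&L&1-Lq&0\\0&0&0&1-L(q+1)\end{pmatrix},\qquad R(L;q,h)=P\hat R(L;q,h).$$ Then $R(K';q,h)$ is invertible and $$P\,R(K;q,h)\,P=\big(R(K';q,h)\big)^{-1}.$$ In particular, for $K=2(1+q)^{-1}$ (assuming $q\neq-1$) one has $K'=K$ and $\hat R(K;q,h)^2=I_4$.
   Context: Matrices are written in the ordered basis $e_1\otimes e_1,e_1\otimes e_2,e_2\otimes e_1,e_2\otimes e_2$ of $\mathbb{C}^2\otimes\mathbb{C}^2$; $P$ is the flip matrix, i.e. the $4\times4$ permutation matrix swapping the second and third basis vectors. The matrix $PRP$ is what the paper denotes $(21)R$. *)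

theory Defs
  imports "Jordan_Normal_Form.Matrix" "Jordan_Normal_Form.Determinant"
begin

text \<open>Matrices in the ordered basis e1 x e1, e1 x e2, e2 x e1, e2 x e2.\<close>

definition flipP :: "complex mat" where
  "flipP = mat_of_rows_list 4
     [[1,0,0,0],
      [0,0,1,0],
      [0,1,0,0],
      [0,0,0,1]]"

definition Rhat :: "complex \<Rightarrow> complex \<Rightarrow> complex \<Rightarrow> complex mat" where
  "Rhat L q h = mat_of_rows_list 4
     [[1, 0, 0, L * h],
      [0, 1 - L, L * q, 0],
      [0, L, 1 - L * q, 0],
      [0, 0, 0, 1 - L * (q + 1)]]"

definition Rmat :: "complex \<Rightarrow> complex \<Rightarrow> complex \<Rightarrow> complex mat" where
  "Rmat L q h = flipP * Rhat L q h"

definition Kprime :: "complex \<Rightarrow> complex \<Rightarrow> complex" where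
  "Kprime K q = K * inverse (K * (1 + q) - 1)"

end

theory Submission
  imports Defs
begin

text \<open>Write \<open>Rhat L q h = 1 + L N\<close> with a fixed matrix \<open>N\<close> satisfying \<open>N\<^sup>2 = -(1 + q) N\<close>.
  Then \<open>L \<mapsto> Rhat L q h\<close> turns the operation \<open>A \<star> B = A + B - (1 + q) A B\<close> into matrix
  multiplication, and \<open>K \<star> K' = 0\<close> exactly when \<open>K' = K / (K (1 + q) - 1)\<close>.  Conjugating
  \<open>R = P Rhat\<close> by the involution \<open>P\<close> gives \<open>P R(K) P = Rhat(K) P\<close>, which is inverted by
  \<open>P Rhat(K') = R(K')\<close>.\<close>

lemma flipP_carrier: "flipP \<in> carrier_mat 4 4"
  by (simp add: flipP_def mat_of_rows_list_def numeral_eq_Suc)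

lemma Rhat_carrier: "Rhat L q h \<in> carrier_mat 4 4"
  by (simp add: Rhat_def mat_of_rows_list_def numeral_eq_Suc)

lemma flipP_mult_flipP: "flipP * flipP = 1\<^sub>m 4"
  by (rule eq_matI)
    (auto simp: flipP_def mat_of_rows_list_def scalar_prod_def less_Suc_eq numeral_eq_Suc)

lemma Rhat_zero: "Rhat 0 q h = 1\<^sub>m 4"
  by (rule eq_matI) (auto simp: Rhat_def mat_of_rows_list_def less_Suc_eq numeral_eq_Suc)

lemma Rhat_mult: "Rhat A q h * Rhat B q h = Rhat (A + B - A * B * (1 + q)) q h"
  by (rule eq_matI)
    (auto simp: Rhat_def mat_of_rows_list_def scalar_prod_def less_Suc_eq numeral_eq_Suc
      algebra_simps)

lemma Rhat_mult_eq_one: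
  assumes "A + B = A * B * (1 + q)"
  shows "Rhat A q h * Rhat B q h = 1\<^sub>m 4"
  using assms by (simp add: Rhat_mult Rhat_zero)

lemma Kprime_add:
  assumes "K * (1 + q) \<noteq> 1"
  shows "Kprime K q + K = Kprime K q * K * (1 + q)"
proof -
  have "K * (1 + q) - 1 \<noteq> 0"
    using assms by simp
  then show ?thesis
    unfolding Kprime_def by (simp add: field_simps)
qed

lemma flipP_Rmat_flipP: "flipP * Rmat K q h * flipP = Rhat K q h * flipP"
  unfolding Rmat_def
  using flipP_carrier Rhat_carrier flipP_mult_flipP
  by (metis assoc_mult_mat left_mult_one_mat mult_carrier_mat)

lemma inverts_mat_involution_conj:
  fixes P A B :: "'a :: comm_ring_1 mat"
  assumes P: "P \<in> carrier_mat n n" and A: "A \<in> carrier_mat n n" and B: "B \<in> carrier_mat n n"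
    and "P * P = 1\<^sub>m n" and "A * B = 1\<^sub>m n"
  shows "inverts_mat (P * A) (B * P)"
proof -
  have "P * A * (B * P) = P * (A * B) * P"
    using P A B by (simp add: assoc_mult_mat[of _ n n _ n _ n])
  also have "\<dots> = 1\<^sub>m n"
    using P \<open>P * P = 1\<^sub>m n\<close> \<open>A * B = 1\<^sub>m n\<close> by simp
  finally show ?thesis
    using P by (simp add: inverts_mat_def)
qed

lemma inverts_mat_through_involution:
  fixes P A B :: "'a :: comm_ring_1 mat"
  assumes P: "P \<in> carrier_mat n n" and A: "A \<in> carrier_mat n n" and B: "B \<in> carrier_mat n n"
    and "P * P = 1\<^sub>m n" and "A * B = 1\<^sub>m n"
  shows "inverts_mat (A * P) (P * B)"
proof -
  have "A * P * (P * B) = A * (P * P) * B"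
    using P A B by (simp add: assoc_mult_mat[of _ n n _ n _ n])
  also have "\<dots> = 1\<^sub>m n"
    using A \<open>P * P = 1\<^sub>m n\<close> \<open>A * B = 1\<^sub>m n\<close> by simp
  finally show ?thesis
    using A by (simp add: inverts_mat_def)
qed

theorem mainTheorem11:
  fixes q h K :: complex
  assumes "K * (1 + q) \<noteq> 1"
  shows "invertible_mat (Rmat (Kprime K q) q h)
       \<and> inverts_mat (Rmat (Kprime K q) q h) (flipP * Rmat K q h * flipP)
       \<and> inverts_mat (flipP * Rmat K q h * flipP) (Rmat (Kprime K q) q h)
       \<and> (q \<noteq> -1 \<longrightarrow>
            (let K0 = 2 * inverse (1 + q) in
               Kprime K0 q = K0 \<and> Rhat K0 q h * Rhat K0 q h = 1\<^sub>m 4))"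
proof -
  let ?K' = "Kprime K q"
  have "Rhat ?K' q h * Rhat K q h = 1\<^sub>m 4" "Rhat K q h * Rhat ?K' q h = 1\<^sub>m 4"
    using Kprime_add[OF assms] by (auto intro: Rhat_mult_eq_one simp: algebra_simps)
  then have right: "inverts_mat (Rmat ?K' q h) (flipP * Rmat K q h * flipP)"
    and left: "inverts_mat (flipP * Rmat K q h * flipP) (Rmat ?K' q h)"
    unfolding flipP_Rmat_flipP unfolding Rmat_def
    by (auto intro!: inverts_mat_involution_conj inverts_mat_through_involution
      flipP_carrier Rhat_carrier flipP_mult_flipP)
  moreover have "invertible_mat (Rmat ?K' q h)"
    using right left flipP_carrier Rhat_carrier
    by (auto simp: invertible_mat_def square_mat.simps Rmat_def)
  moreover have "Kprime K0 q = K0 \<and> Rhat K0 q h * Rhat K0 q h = 1\<^sub>m 4"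
    if "q \<noteq> -1" and "K0 = 2 * inverse (1 + q)" for K0
  proof -
    have "K0 * (1 + q) = 2"
      using that by (simp add: add_eq_0_iff)
    then show ?thesis
      by (simp add: Kprime_def Rhat_mult_eq_one algebra_simps)
  qed
  ultimately show ?thesis
    by (simp add: Let_def)
qed

end
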